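(* For every instance of OfflineKnapExp and every $Q\subseteq\mathcal{I}$: if $U_P(Q)\le p^*$ holds for every packing $P$, then there is a packing $P\subseteq Q\cup\mathcal{I}_T$ with $p(P)=p^*$. Consequently, $Q$ is feasible if and only if $\sum_{i\in P\cap Q}(U_i-p_i)\ge U_P-p^*$ for every packing $P$, where $U_P=\sum_{i\in P}U_i$.
   Context: An instance of OfflineKnapExp is $\mathcal{K}=(\mathcal{I},B,w,p,\mathcal{A})$ where $\mathcal{I}=\{1,\dots,n\}$ is a set of items, $B\in\mathbb{N}$ is the knapsack capacity, each item has a weight $w_i\in\mathbb{N}$ with $w_i\le B$, a profit $p_i\in\mathbb{R}_{\ge 0}$, and an uncertainty interval $I_i\in\mathcal{A}$ with $p_i\in I_i$; each $I_i$ is either an open interval $(L_i,U_i)$ or trivial, $I_i=\{p_i\}$ (in which case $L_i=U_i=p_i$). $\mathcal{I}_T$ denotes the set of trivial items. A packing is a set $P\subseteq\mathcal{I}$ with $\sum_{i\in P}w_i\le B$; $p(P)=\sum_{i\in P}p_i$, and $p^*$ is the maximum of $p(P)$ over all packings. For $Q\subseteq\mathcal{I}$ let $U_i(Q)=p_i$ if $i\in Q$ and $U_i(Q)=U_i$ otherwise, and $U_P(Q)=\sum_{i\in P}U_i(Q)$. A query set $Q\subseteq\mathcal{I}$ is feasible if (1) there is a packing $P\subseteq Q\cup\mathcal{I}_T$ with $p(P)=p^*$, and (2) $U_P(Q)\le p^*$ for every packing $P$. *)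

theory Defs
  imports Complex_Main
begin

text \<open>An OfflineKnapExp instance: items are 0..<n, capacity B, weights w, true profits p,
 interval endpoints L, U, and the set T of trivial items (interval {p i}).\<close>

definition knap_instance ::
  "nat \<Rightarrow> nat \<Rightarrow> (nat \<Rightarrow> nat) \<Rightarrow> (nat \<Rightarrow> real) \<Rightarrow> (nat \<Rightarrow> real) \<Rightarrow> (nat \<Rightarrow> real)
   \<Rightarrow> nat set \<Rightarrow> bool" where
  "knap_instance n B w p L U T \<longleftrightarrow>
     T \<subseteq> {..<n} \<and>
     (\<forall>i<n. w i \<le> B \<and> 0 \<le> p i) \<and>
     (\<forall>i\<in>T. L i = p i \<and> U i = p i) \<and>
     (\<forall>i\<in>{..<n} - T. L i < p i \<and> p i < U i)"

definition packing :: "nat \<Rightarrow> nat \<Rightarrow> (nat \<Rightarrow> nat) \<Rightarrow> nat set \<Rightarrow> bool" where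
  "packing n B w P \<longleftrightarrow> P \<subseteq> {..<n} \<and> (\<Sum>i\<in>P. w i) \<le> B"

definition profit :: "(nat \<Rightarrow> real) \<Rightarrow> nat set \<Rightarrow> real" where
  "profit p P = (\<Sum>i\<in>P. p i)"

definition opt_profit :: "nat \<Rightarrow> nat \<Rightarrow> (nat \<Rightarrow> nat) \<Rightarrow> (nat \<Rightarrow> real) \<Rightarrow> real" where
  "opt_profit n B w p = Max {profit p P | P. packing n B w P}"

definition Uq :: "(nat \<Rightarrow> real) \<Rightarrow> (nat \<Rightarrow> real) \<Rightarrow> nat set \<Rightarrow> nat \<Rightarrow> real" where
  "Uq p U Q i = (if i \<in> Q then p i else U i)"

definition UP :: "(nat \<Rightarrow> real) \<Rightarrow> (nat \<Rightarrow> real) \<Rightarrow> nat set \<Rightarrow> nat set \<Rightarrow> real" where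
  "UP p U Q P = (\<Sum>i\<in>P. Uq p U Q i)"

definition feasible_query ::
  "nat \<Rightarrow> nat \<Rightarrow> (nat \<Rightarrow> nat) \<Rightarrow> (nat \<Rightarrow> real) \<Rightarrow> (nat \<Rightarrow> real) \<Rightarrow> nat set \<Rightarrow> nat set \<Rightarrow> bool" where
  "feasible_query n B w p U T Q \<longleftrightarrow>
     (\<exists>P. packing n B w P \<and> P \<subseteq> Q \<union> T \<and> profit p P = opt_profit n B w p) \<and>
     (\<forall>P. packing n B w P \<longrightarrow> UP p U Q P \<le> opt_profit n B w p)"

end

theory Submission
  imports Defs
begin

text \<open>Every item satisfies \<open>p i \<le> U i\<close>, strictly unless it is trivial, so replacing profits
  by the bounds \<open>U\<^sub>i(Q)\<close> strictly increases the value of any packing that uses an item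
  outside \<open>Q \<union> T\<close>. An optimal packing therefore lies in \<open>Q \<union> T\<close> as soon as no packing
  has \<open>U\<^sub>P(Q)\<close> above \<open>p\<^sup>*\<close>. The equivalence then follows from
  \<open>U\<^sub>P(Q) = U\<^sub>P - (\<Sum>i\<in>P \<inter> Q. U\<^sub>i - p\<^sub>i)\<close>.\<close>

lemma finite_packing: "packing n B w P \<Longrightarrow> finite P"
  unfolding packing_def by (meson finite_lessThan finite_subset)

lemma finite_packing_profits: "finite {profit p P | P. packing n B w P}"
proof (rule finite_subset)
  show "{profit p P | P. packing n B w P} \<subseteq> profit p ` Pow {..<n}"
    by (auto simp: packing_def)
qed simp

lemma opt_profit_attained: "\<exists>P. packing n B w P \<and> profit p P = opt_profit n B w p"
proof -
  have "packing n B w {}"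
    by (simp add: packing_def)
  then have "{profit p P | P. packing n B w P} \<noteq> {}"
    by blast
  from Max_in[OF finite_packing_profits this] show ?thesis
    unfolding opt_profit_def by auto
qed

lemma UP_eq_sum_U_minus_gain:
  assumes "finite P"
  shows "UP p U Q P = (\<Sum>i\<in>P. U i) - (\<Sum>i\<in>P \<inter> Q. U i - p i)"
proof -
  have "UP p U Q P = (\<Sum>i\<in>P \<inter> Q. Uq p U Q i) + (\<Sum>i\<in>P - Q. Uq p U Q i)"
    unfolding UP_def using assms by (metis Diff_eq sum.Int_Diff)
  also have "\<dots> = (\<Sum>i\<in>P \<inter> Q. p i) + (\<Sum>i\<in>P - Q. U i)"
    by (simp add: Uq_def)
  finally have "UP p U Q P = (\<Sum>i\<in>P \<inter> Q. p i) + (\<Sum>i\<in>P - Q. U i)" .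
  moreover have "(\<Sum>i\<in>P. U i) = (\<Sum>i\<in>P \<inter> Q. U i) + (\<Sum>i\<in>P - Q. U i)"
    using assms by (metis Diff_eq sum.Int_Diff)
  ultimately show ?thesis
    by (simp add: sum_subtractf)
qed

lemma profit_le_Uq:
  assumes "knap_instance n B w p L U T" and "i < n"
  shows "p i \<le> Uq p U Q i"
  using assms unfolding knap_instance_def Uq_def by (force intro: less_imp_le)

lemma profit_less_Uq:
  assumes "knap_instance n B w p L U T" and "i < n" and "i \<notin> Q \<union> T"
  shows "p i < Uq p U Q i"
  using assms unfolding knap_instance_def Uq_def by auto

lemma profit_less_UP:
  assumes inst: "knap_instance n B w p L U T" and P: "packing n B w P"
    and "\<not> P \<subseteq> Q \<union> T"
  shows "profit p P < UP p U Q P"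
proof -
  have below_n: "i < n" if "i \<in> P" for i
    using P that by (auto simp: packing_def)
  obtain j where "j \<in> P" "j \<notin> Q \<union> T"
    using assms(3) by blast
  then show ?thesis
    unfolding profit_def UP_def
    using sum_strict_mono_ex1[OF finite_packing[OF P], of p "Uq p U Q"]
      profit_le_Uq[OF inst below_n] profit_less_Uq[OF inst below_n] by blast
qed

lemma optimal_packing_within_queried:
  assumes inst: "knap_instance n B w p L U T"
    and bounded: "\<forall>P. packing n B w P \<longrightarrow> UP p U Q P \<le> opt_profit n B w p"
  shows "\<exists>P. packing n B w P \<and> P \<subseteq> Q \<union> T \<and> profit p P = opt_profit n B w p"
proof -
  obtain P where P: "packing n B w P" "profit p P = opt_profit n B w p"
    using opt_profit_attained by blast
  have "P \<subseteq> Q \<union> T"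
    using profit_less_UP[OF inst P(1)] bounded P by force
  with P show ?thesis
    by blast
qed

theorem mainTheorem6:
  fixes n B :: nat and w :: "nat \<Rightarrow> nat" and p L U :: "nat \<Rightarrow> real" and T Q :: "nat set"
  assumes "knap_instance n B w p L U T"
    and "Q \<subseteq> {..<n}"
  shows "((\<forall>P. packing n B w P \<longrightarrow> UP p U Q P \<le> opt_profit n B w p) \<longrightarrow>
            (\<exists>P. packing n B w P \<and> P \<subseteq> Q \<union> T \<and> profit p P = opt_profit n B w p))
       \<and> (feasible_query n B w p U T Q \<longleftrightarrow>
            (\<forall>P. packing n B w P \<longrightarrow>
               (\<Sum>i\<in>P \<inter> Q. U i - p i) \<ge> (\<Sum>i\<in>P. U i) - opt_profit n B w p))"
proof -
  have bound_iff_gain: "UP p U Q P \<le> opt_profit n B w p \<longleftrightarrow>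
      (\<Sum>i\<in>P \<inter> Q. U i - p i) \<ge> (\<Sum>i\<in>P. U i) - opt_profit n B w p"
    if "packing n B w P" for P
    using UP_eq_sum_U_minus_gain[OF finite_packing[OF that], of p U Q] by linarith
  show ?thesis
    using optimal_packing_within_queried[OF assms(1)] bound_iff_gain
    unfolding feasible_query_def by blast
qed

end
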